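(* Let $I\subseteq\mathbb{R}$ be a compact interval, let $b,d\colon I\to[0,\infty)$ and $c\colon I^2\to[0,\infty)$ be twice continuously differentiable, and let $f$ be the monomorphic invasion fitness defined in the context. Let $x_0$ be a point in the interior of $I$ which is not a local fitness maximum or minimum, and for $\delta>0$ let $g_\delta\colon[0,\infty)\to\mathcal{X}_\delta$ be the resident-trait function started from the unique resident trait $x_0$, as described in the context. Then, for every $T>0$, the functions $t\mapsto g_\delta(t/\delta^2)$ converge uniformly on $[0,T]$ (in particular in the space of càdlàg paths $\mathbb{D}([0,T],\mathbb{R})$) as $\delta\to0$ to the unique function $x\colon[0,T]\to I$ solving $$\frac{\mathrm{d}x}{\mathrm{d}t}=\partial_1 f(x(t),x(t)),\qquad x(0)=x_0.$$
   Context: Model: for $\delta>0$ the trait space is the grid $\mathcal{X}_\delta=I\cap\delta\mathbb{Z}$ (the grid is shifted if necessary so that $x_0\in\mathcal{X}_\delta$ for all $\delta$). An individual with trait $x$ gives birth at rate $b(x)$; with probability $K^{-\alpha}$ ($\alpha\in(0,1)$, $K$ the carrying capacity) the offspring mutates to $x+\delta$ or $x-\delta$ with equal probability (keeping the parental trait if the mutant is outside $\mathcal{X}_\delta$); it dies at rate $d(x)$ and, due to competition with each individual of trait $y$, at rate $c(x,y)/K$. A set of traits $\mathbf v$ coexists if the Lotka–Volterra system $\dot n_y=n_y(b(y)-d(y)-\sum_{x\in\mathbf v}c(y,x)n_x)$, $y\in\mathbf v$, has a unique coordinatewise strictly positive equilibrium $\bar n(\mathbf v)$; the invasion fitness of $y$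 against $\mathbf v$ is $f(y,\mathbf v)=b(y)-d(y)-\sum_{x\in\mathbf v}c(y,x)\bar n_x(\mathbf v)$, and $f(y,x):=f(y,\{x\})=b(y)-d(y)-c(y,x)\frac{b(x)-d(x)}{c(x,x)}$ (with $b(x)>d(x)$ so that single traits coexist). A trait $x$ is a local fitness minimum if $f(x+\delta,x)>0$ and $f(x-\delta,x)>0$, and a local fitness maximum if $f(x+\delta,x)<0$ and $f(x-\delta,x)<0$. Large-population limit: writing the population size of trait $x$ at time $t\log K$ as $K^{\beta^K_{x}(t)}-1$, as $K\to\infty$ and then $\alpha\to1$ the exponents converge to deterministic piecewise affine functions $\beta^\delta_x$, defined recursively: $\beta^\delta_{x_0}(0)=1$, $\beta^\delta_x(0)=0$ otherwise, $s_0=0$, $\mathbf v_0=\{x_0\}$; for $t\in[s_{k-1},s_k]$, $\beta^\delta_x(t)=[\beta^\delta_x(s_{k-1})+(t-s_{k-1})f(x,\mathbf v_{k-1})]\vee0$ if $x$ is a grid neighbour of a trait in $\mathbf v_{k-1}$ (not in $\mathbf v_{k-1}$) or $\beta^\delta_x(s_{k-1})>0$, and $\beta^\delta_x(t)=0$ otherwise; $s_k$ is the first time after $s_{k-1}$ at which some $y_k\notin\mathbf v_{k-1}$ has $\beta^\delta_{y_k}=1$, and $\mathbf v_k$ consists of the traits with positive coordinates in the equilibrium of the Lotka–Volterra system for $\mathbf v_{k-1}\cup\{y_k\}$. A trait $x$ is resident at time $t$ if $\beta^\delta_x(t)=1$. Standing assumptions: the population stays monomorphic (at each time there is a unique resident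 trait and each change of resident replaces it by a grid neighbour); every trait $x$ that is resident at some time $t_1$ and has $\beta^\delta_x(t_2)<1$ at a later time $t_2$ satisfies $\beta^\delta_x<1$ on $[t_2,t_3]$ and $\beta^\delta_x(t_3)=0$ for some $t_3>t_2$; and (by convention on the direction of evolution) the resident trait increases. $g_\delta(t)$ is the unique resident trait at time $t$, taken càdlàg at the change times; under these conventions $$g_\delta(t)=x_0+\max\Big\{i\delta:\ t\ge\sum_{k=0}^{i-1}\frac{1}{f(x_0+(k+1)\delta,\,x_0+k\delta)}\Big\},$$ with the convention that $1/f=\infty$ when $f\le 0$.
   Formalization: The limit is any function x: [0,T] -> I with $x(0)=x_0$ solving the differential equation, whose existence is assumed, and $x_0$ is neither a local fitness maximum nor minimum for all sufficiently small $\delta$. Apart from conventions, each condition added here is assumed in the paper as well or is needed for the statement above to hold. *)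

theory Defs
  imports "HOL-Analysis.Analysis"
begin

definition C2_on :: "'a::real_normed_vector set \<Rightarrow> ('a \<Rightarrow> real) \<Rightarrow> bool" where
  "C2_on S h \<longleftrightarrow>
     (\<exists>(h1 :: 'a \<Rightarrow> 'a \<Rightarrow>\<^sub>L real) (h2 :: 'a \<Rightarrow> 'a \<Rightarrow>\<^sub>L ('a \<Rightarrow>\<^sub>L real)).
        (\<forall>p\<in>S. (h has_derivative blinfun_apply (h1 p)) (at p within S)) \<and>
        (\<forall>p\<in>S. (h1 has_derivative blinfun_apply (h2 p)) (at p within S)) \<and>
        continuous_on S h2)"

text \<open>Monomorphic invasion fitness f(y,x) of trait y against resident x.\<close>
definition fit :: "(real \<Rightarrow> real) \<Rightarrow> (real \<Rightarrow> real) \<Rightarrow> (real \<Rightarrow> real \<Rightarrow> real)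
                   \<Rightarrow> real \<Rightarrow> real \<Rightarrow> real" where
  "fit b d c y x = b y - d y - c y x * (b x - d x) / c x x"

definition local_fitness_min :: "(real \<Rightarrow> real \<Rightarrow> real) \<Rightarrow> real \<Rightarrow> real \<Rightarrow> bool" where
  "local_fitness_min f \<delta> x \<longleftrightarrow> f (x + \<delta>) x > 0 \<and> f (x - \<delta>) x > 0"

definition local_fitness_max :: "(real \<Rightarrow> real \<Rightarrow> real) \<Rightarrow> real \<Rightarrow> real \<Rightarrow> bool" where
  "local_fitness_max f \<delta> x \<longleftrightarrow> f (x + \<delta>) x < 0 \<and> f (x - \<delta>) x < 0"

text \<open>The resident trait has made (at least) i upward steps by time t: each of the first
  i successive grid neighbours x0+(k+1)delta lies in the trait space I and has positive
  invasion fitness against x0+k delta (otherwise 1/f = infinity), and t is at least the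
  sum of the waiting times 1/f.\<close>
definition reached :: "real set \<Rightarrow> (real \<Rightarrow> real \<Rightarrow> real) \<Rightarrow> real \<Rightarrow> real \<Rightarrow> real \<Rightarrow> nat \<Rightarrow> bool" where
  "reached I f x0 \<delta> t i \<longleftrightarrow>
     (\<forall>k<i. x0 + real (Suc k) * \<delta> \<in> I \<and> f (x0 + real (Suc k) * \<delta>) (x0 + real k * \<delta>) > 0) \<and>
     t \<ge> (\<Sum>k<i. 1 / f (x0 + real (Suc k) * \<delta>) (x0 + real k * \<delta>))"

definition resident :: "real set \<Rightarrow> (real \<Rightarrow> real \<Rightarrow> real) \<Rightarrow> real \<Rightarrow> real \<Rightarrow> real \<Rightarrow> real" where
  "resident I f x0 \<delta> t = x0 + real (Max {i. reached I f x0 \<delta> t i}) * \<delta>"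

end

theory Submission
  imports Defs
begin

(* Write s(y) for the derivative of f(., y) at y. As f(y, y) = 0, the C^2 hypotheses give
   f(y', y) = (y' - y) s(y) + O((y' - y)^2) with s Lipschitz; the limit equation is x' = s(x).
   On the time scale t / \<delta>^2 the resident stays at a grid point y for \<delta>^2 / f(y + \<delta>, y)
   = \<delta> / s(y) + O(\<delta>^2), which up to O(\<delta>^2) is also the time the solution needs to cross
   [y, y + \<delta>]. The direction of evolution forces s(x0) \<ge> 0.
   If s(x0) > 0, uniqueness for Lipschitz ODEs keeps s(x(t)) \<ge> m > 0; summing the per-cell
   errors over the O(1/\<delta>) cells, walk and solution reach each grid point within time O(\<delta>)
   of each other, so they stay O(\<delta>) apart uniformly on [0, T].
   If s(x0) = 0 the solution is constant, the k-th step has fitness O(k \<delta>^2) and thus takes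
   time at least of order 1/k, so by the harmonic series only exp(O(T)) steps are made:
   again an O(\<delta>) displacement. *)

section \<open>Mean value estimates and limits\<close>

lemma real_mvt_between:
  fixes g g' :: "real \<Rightarrow> real"
  assumes deriv: "\<forall>u\<in>{a..b}. (g has_real_derivative g' u) (at u within {a..b})"
    and y: "y \<in> {a..b}" and y': "y' \<in> {a..b}"
  obtains \<xi> where "\<xi> \<in> {a..b}" "\<bar>\<xi> - y\<bar> \<le> \<bar>y' - y\<bar>" "\<bar>\<xi> - y'\<bar> \<le> \<bar>y' - y\<bar>"
    "g y' - g y = g' \<xi> * (y' - y)"
proof -
  have ordered: "\<exists>\<xi>\<in>{p..q}. g q - g p = g' \<xi> * (q - p)"
    if "p \<le> q" "p \<in> {a..b}" "q \<in> {a..b}" for p q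
  proof -
    have sub: "{p..q} \<subseteq> {a..b}" using that by auto
    have "(g has_real_derivative g' u) (at u within {p..q})" if "p \<le> u" "u \<le> q" for u
      using deriv sub that by (auto intro: DERIV_subset[OF _ sub])
    then have "(g has_derivative (*) (g' u)) (at u within {p..q})" if "p \<le> u" "u \<le> q" for u
      using that by (simp add: has_field_derivative_def)
    from mvt_very_simple[OF \<open>p \<le> q\<close> this] show ?thesis by simp
  qed
  show thesis
  proof (cases "y \<le> y'")
    case True
    then obtain \<xi> where "\<xi> \<in> {y..y'}" "g y' - g y = g' \<xi> * (y' - y)"
      using ordered[OF True y y'] by blast
    with y y' show ?thesis by (intro that[of \<xi>]) auto
  next
    case False
    then obtain \<xi> where "\<xi> \<in> {y'..y}" "g y - g y' = g' \<xi> * (y - y')"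
      using ordered[of y' y] y y' by auto
    with y y' show ?thesis by (intro that[of \<xi>]) (auto simp: algebra_simps)
  qed
qed

lemma lipschitz_derivative_taylor_bound:
  fixes g g' :: "real \<Rightarrow> real"
  assumes deriv: "\<forall>u\<in>{a..b}. (g has_real_derivative g' u) (at u within {a..b})"
    and lip: "B-lipschitz_on {a..b} g'"
    and y: "y \<in> {a..b}" and y': "y' \<in> {a..b}"
  shows "\<bar>g y' - g y - (y' - y) * g' y\<bar> \<le> B * (y' - y)\<^sup>2"
proof -
  have affine_deriv: "\<forall>u\<in>{a..b}. ((\<lambda>u. g u - u * g' y) has_real_derivative g' u - g' y)
      (at u within {a..b})"
    using deriv by (auto intro!: derivative_eq_intros)
  obtain \<xi> where \<xi>: "\<xi> \<in> {a..b}" "\<bar>\<xi> - y\<bar> \<le> \<bar>y' - y\<bar>"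
    and eq: "(g y' - y' * g' y) - (g y - y * g' y) = (g' \<xi> - g' y) * (y' - y)"
    using real_mvt_between[OF affine_deriv y y'] by blast
  have "g y' - g y - (y' - y) * g' y = (g' \<xi> - g' y) * (y' - y)"
    using eq by (simp add: algebra_simps)
  then have "\<bar>g y' - g y - (y' - y) * g' y\<bar> = \<bar>g' \<xi> - g' y\<bar> * \<bar>y' - y\<bar>"
    by (simp add: abs_mult)
  also have "\<dots> \<le> B * \<bar>\<xi> - y\<bar> * \<bar>y' - y\<bar>"
    using lipschitz_onD[OF lip \<xi>(1) y] by (intro mult_right_mono) (auto simp: dist_real_def)
  also have "\<dots> \<le> B * \<bar>y' - y\<bar> * \<bar>y' - y\<bar>"
    using \<xi>(2) lipschitz_on_nonneg[OF lip] by (intro mult_right_mono mult_left_mono) auto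
  finally show ?thesis by (simp add: power2_eq_square mult.assoc)
qed

lemma has_real_derivative_unique_Icc:
  fixes g :: "real \<Rightarrow> real"
  assumes "a < b" "y \<in> {a..b}"
    and "(g has_real_derivative D) (at y within {a..b})"
    and "(g has_real_derivative D') (at y within {a..b})"
  shows "D = D'"
  using vector_derivative_unique_within_closed_interval[of a b y g D D'] assms
  by (simp add: has_real_derivative_iff_has_vector_derivative)

lemma derivative_nonneg_of_eventually_pos:
  fixes F :: "real \<Rightarrow> real \<Rightarrow> real"
  assumes "x0 \<in> {a0<..<a1}"
    and deriv: "((\<lambda>u. F u x0) has_real_derivative D) (at x0 within {a0..a1})"
    and "F x0 x0 = 0"
    and upward: "\<forall>\<^sub>F \<delta> in at_right 0. F (x0 + \<delta>) x0 > 0"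
  shows "0 \<le> D"
proof -
  have "((\<lambda>u. F u x0) has_real_derivative D) (at x0)"
    using deriv assms(1) at_within_interior[of x0 "{a0..a1}"] by simp
  then have "((\<lambda>\<delta>. (F (x0 + \<delta>) x0 - F x0 x0) / \<delta>) \<longlongrightarrow> D) (at_right 0)"
    unfolding DERIV_def by (rule tendsto_within_subset) simp
  then have "((\<lambda>\<delta>. F (x0 + \<delta>) x0 / \<delta>) \<longlongrightarrow> D) (at_right 0)"
    using \<open>F x0 x0 = 0\<close> by simp
  moreover have "\<forall>\<^sub>F \<delta> in at_right 0. 0 \<le> F (x0 + \<delta>) x0 / \<delta>"
    using upward eventually_at_right_less by eventually_elim simp
  ultimately show ?thesis by (intro tendsto_lowerbound) auto
qed

lemma uniform_limit_at_right_0_of_linear_bound: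
  fixes G :: "real \<Rightarrow> 'a \<Rightarrow> 'b::metric_space"
  assumes "\<forall>\<^sub>F \<delta> in at_right 0. \<forall>t\<in>X. dist (G \<delta> t) (g t) \<le> K * \<delta>"
  shows "uniform_limit X G g (at_right 0)"
  unfolding uniform_limit_iff
proof (intro allI impI)
  fix e :: real assume "e > 0"
  then have "\<forall>\<^sub>F \<delta> in at_right 0. \<delta> < e / (\<bar>K\<bar> + 1)"
    by (auto simp: eventually_at_right_field intro!: exI[of _ "e / (\<bar>K\<bar> + 1)"])
  moreover have "\<forall>\<^sub>F \<delta> in at_right (0::real). 0 < \<delta>"
    by (rule eventually_at_right_less)
  ultimately show "\<forall>\<^sub>F \<delta> in at_right 0. \<forall>t\<in>X. dist (G \<delta> t) (g t) < e"
    using assms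
  proof eventually_elim
    case (elim \<delta>)
    have "K * \<delta> \<le> (\<bar>K\<bar> + 1) * \<delta>" using elim by (intro mult_right_mono) auto
    also have "\<dots> < e" using elim \<open>e > 0\<close> by (simp add: field_simps)
    finally show ?case using elim by fastforce
  qed
qed

section \<open>Lipschitz bounds from \<open>C\<^sup>2\<close> regularity\<close>

lemma lipschitz_on_compact_bounded:
  fixes f :: "'a::metric_space \<Rightarrow> 'b::real_normed_vector"
  assumes "compact U" "L-lipschitz_on U f"
  obtains B where "B > 0" "\<forall>x\<in>U. norm (f x) \<le> B"
proof -
  have "bounded (f ` U)"
    using assms by (intro compact_imp_bounded compact_continuous_image lipschitz_on_continuous_on)
  then show thesis using that by (auto simp: bounded_pos)
qed

lemma lipschitz_on_mult_compact:
  fixes f g :: "'a::metric_space \<Rightarrow> real"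
  assumes U: "compact U" and f: "Lf-lipschitz_on U f" and g: "Lg-lipschitz_on U g"
  obtains L where "L-lipschitz_on U (\<lambda>x. f x * g x)"
proof -
  obtain A where "A > 0" and A: "\<forall>x\<in>U. \<bar>f x\<bar> \<le> A"
    using lipschitz_on_compact_bounded[OF U f] by auto
  obtain B where "B > 0" and B: "\<forall>x\<in>U. \<bar>g x\<bar> \<le> B"
    using lipschitz_on_compact_bounded[OF U g] by auto
  have "(Lf * B + A * Lg)-lipschitz_on U (\<lambda>x. f x * g x)"
  proof (rule lipschitz_onI)
    fix x y assume xy: "x \<in> U" "y \<in> U"
    have "f x * g x - f y * g y = (f x - f y) * g x + f y * (g x - g y)"
      by (simp add: algebra_simps)
    then have "\<bar>f x * g x - f y * g y\<bar> \<le> \<bar>f x - f y\<bar> * \<bar>g x\<bar> + \<bar>f y\<bar> * \<bar>g x - g y\<bar>"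
      by (metis abs_mult abs_triangle_ineq)
    also have "\<dots> \<le> (Lf * dist x y) * B + A * (Lg * dist x y)"
      using lipschitz_onD[OF f xy] lipschitz_onD[OF g xy] A B xy
      by (intro add_mono mult_mono) (auto simp: dist_real_def)
    finally show "dist (f x * g x) (f y * g y) \<le> (Lf * B + A * Lg) * dist x y"
      by (simp add: dist_real_def algebra_simps)
  qed (use lipschitz_on_nonneg[OF f] lipschitz_on_nonneg[OF g] \<open>A > 0\<close> \<open>B > 0\<close> in simp)
  then show thesis by (rule that)
qed

lemma lipschitz_on_inverse_compact:
  fixes f :: "'a::metric_space \<Rightarrow> real"
  assumes U: "compact U" and f: "L-lipschitz_on U f" and pos: "\<forall>x\<in>U. f x > 0"
  obtains L' where "L'-lipschitz_on U (\<lambda>x. 1 / f x)"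
proof -
  obtain q where q: "q > 0" "\<forall>x\<in>U. q \<le> f x"
  proof (cases "U = {}")
    case False
    then obtain x0 where "x0 \<in> U" "\<forall>x\<in>U. f x0 \<le> f x"
      using continuous_attains_inf[OF U _ lipschitz_on_continuous_on[OF f]] by blast
    then show thesis using pos that by blast
  qed (rule that[of 1], auto)
  have "(L / q\<^sup>2)-lipschitz_on U (\<lambda>x. 1 / f x)"
  proof (rule lipschitz_onI)
    fix x y assume xy: "x \<in> U" "y \<in> U"
    have "q\<^sup>2 \<le> f x * f y"
      unfolding power2_eq_square using q xy by (intro mult_mono) auto
    moreover have "\<bar>1 / f x - 1 / f y\<bar> = \<bar>f y - f x\<bar> / (f x * f y)"
    proof -
      have "f x > 0" "f y > 0" using pos xy by auto
      then show ?thesis by (simp add: divide_simps abs_mult)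
    qed
    ultimately have "\<bar>1 / f x - 1 / f y\<bar> \<le> \<bar>f y - f x\<bar> / q\<^sup>2"
      using q by (simp add: frac_le)
    also have "\<dots> \<le> L * dist x y / q\<^sup>2"
      using lipschitz_onD[OF f xy] by (simp add: dist_real_def abs_minus_commute divide_right_mono)
    finally show "dist (1 / f x) (1 / f y) \<le> L / q\<^sup>2 * dist x y"
      by (simp add: dist_real_def)
  qed (use lipschitz_on_nonneg[OF f] in simp)
  then show thesis by (rule that)
qed

lemma lipschitz_on_divide_compact:
  fixes f g :: "'a::metric_space \<Rightarrow> real"
  assumes U: "compact U" and f: "Lf-lipschitz_on U f" and g: "Lg-lipschitz_on U g"
    and pos: "\<forall>x\<in>U. g x > 0"
  obtains L where "L-lipschitz_on U (\<lambda>x. f x / g x)"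
proof -
  obtain Linv where "Linv-lipschitz_on U (\<lambda>x. 1 / g x)"
    using lipschitz_on_inverse_compact[OF U g pos] by blast
  then obtain L where "L-lipschitz_on U (\<lambda>x. f x * (1 / g x))"
    using lipschitz_on_mult_compact[OF U f] by blast
  then show thesis using that by simp
qed

lemma lipschitz_on_blinfun_apply:
  assumes "B-lipschitz_on S h"
  shows "(B * norm v)-lipschitz_on S (\<lambda>p. blinfun_apply (h p) v)"
proof (rule lipschitz_onI)
  fix p q assume "p \<in> S" "q \<in> S"
  have "dist (h p v) (h q v) = norm (blinfun_apply (h p - h q) v)"
    by (simp add: dist_norm blinfun.diff_left)
  also have "\<dots> \<le> norm (h p - h q) * norm v" by (rule norm_blinfun)
  also have "\<dots> \<le> B * dist p q * norm v"
    using lipschitz_onD[OF assms \<open>p \<in> S\<close> \<open>q \<in> S\<close>] by (simp add: dist_norm mult_right_mono)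
  finally show "dist (h p v) (h q v) \<le> B * norm v * dist p q" by (simp add: mult_ac)
qed (use lipschitz_on_nonneg[OF assms] in simp)

lemma lipschitz_on_section:
  fixes f :: "'a::metric_space \<Rightarrow> 'a \<Rightarrow> 'b::metric_space"
  assumes "B-lipschitz_on (S \<times> S) (\<lambda>p. f (fst p) (snd p))" "z \<in> S"
  shows "B-lipschitz_on S (\<lambda>y. f y z)"
proof (rule lipschitz_onI)
  fix y y' assume "y \<in> S" "y' \<in> S"
  then show "dist (f y z) (f y' z) \<le> B * dist y y'"
    using lipschitz_onD[OF assms(1), of "(y, z)" "(y', z)"] assms(2) by (simp add: dist_Pair_Pair)
qed (rule lipschitz_on_nonneg[OF assms(1)])

lemma lipschitz_on_diagonal:
  fixes f :: "'a::metric_space \<Rightarrow> 'a \<Rightarrow> 'b::metric_space"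
  assumes "B-lipschitz_on (S \<times> S) (\<lambda>p. f (fst p) (snd p))"
  shows "(2 * B)-lipschitz_on S (\<lambda>y. f y y)"
proof (rule lipschitz_onI)
  fix y y' assume "y \<in> S" "y' \<in> S"
  then have "dist (f y y) (f y' y') \<le> B * dist (y, y) (y', y')"
    using lipschitz_onD[OF assms, of "(y, y)" "(y', y')"] by simp
  also have "\<dots> \<le> B * (2 * dist y y')"
    unfolding dist_Pair_Pair using lipschitz_on_nonneg[OF assms]
    by (intro mult_left_mono real_le_lsqrt) (auto simp: power2_eq_square)
  finally show "dist (f y y) (f y' y') \<le> 2 * B * dist y y'" by (simp add: mult_ac)
qed (use lipschitz_on_nonneg[OF assms] in simp)

lemma C2_on_lipschitz_derivative:
  fixes g :: "'a::real_normed_vector \<Rightarrow> real"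
  assumes "C2_on S g" "compact S" "convex S"
  obtains g' :: "'a \<Rightarrow> 'a \<Rightarrow>\<^sub>L real" and B B1
  where "\<forall>p\<in>S. (g has_derivative blinfun_apply (g' p)) (at p within S)"
    "B-lipschitz_on S g'" "B1-lipschitz_on S g"
proof -
  obtain g' :: "'a \<Rightarrow> 'a \<Rightarrow>\<^sub>L real" and g'' :: "'a \<Rightarrow> 'a \<Rightarrow>\<^sub>L ('a \<Rightarrow>\<^sub>L real)"
    where d1: "\<forall>p\<in>S. (g has_derivative blinfun_apply (g' p)) (at p within S)"
      and d2: "\<forall>p\<in>S. (g' has_derivative blinfun_apply (g'' p)) (at p within S)"
      and cont: "continuous_on S g''"
    using assms(1) unfolding C2_on_def by blast
  have "continuous_on S g'"
    using d2 has_derivative_continuous continuous_on_eq_continuous_within by blast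
  then have "bounded (g'' ` S)" "bounded (g' ` S)"
    using assms(2) cont by (auto intro: compact_imp_bounded compact_continuous_image)
  then obtain B B1 where B: "B > 0" "\<forall>p\<in>S. norm (g'' p) \<le> B"
    and B1: "B1 > 0" "\<forall>p\<in>S. norm (g' p) \<le> B1"
    by (auto simp: bounded_pos)
  have "B-lipschitz_on S g'"
    using d2 B assms(3) by (intro bounded_derivative_imp_lipschitz) (auto simp: norm_blinfun.rep_eq)
  moreover have "B1-lipschitz_on S g"
    using d1 B1 assms(3)
    by (intro bounded_derivative_imp_lipschitz) (auto simp: norm_blinfun.rep_eq)
  ultimately show thesis using d1 that by blast
qed

lemma C2_on_real_interval:
  fixes g :: "real \<Rightarrow> real"
  assumes "C2_on {a..b} g"
  obtains g' B B1
  where "\<forall>y\<in>{a..b}. (g has_real_derivative g' y) (at y within {a..b})"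
    "B-lipschitz_on {a..b} g'" "B1-lipschitz_on {a..b} g"
proof -
  obtain h B B1 where d: "\<forall>y\<in>{a..b}. (g has_derivative blinfun_apply (h y)) (at y within {a..b})"
    and lip: "B-lipschitz_on {a..b} h" "B1-lipschitz_on {a..b} g"
    using C2_on_lipschitz_derivative[OF assms] by auto
  have "blinfun_apply (h y) = (*) (h y 1)" for y
  proof
    fix t :: real
    have "h y t = h y (t *\<^sub>R 1)" by simp
    also have "\<dots> = t *\<^sub>R h y 1" by (rule blinfun.scaleR_right)
    finally show "h y t = h y 1 * t" by simp
  qed
  then have "\<forall>y\<in>{a..b}. (g has_real_derivative h y 1) (at y within {a..b})"
    using d by (simp add: has_field_derivative_def)
  with lipschitz_on_blinfun_apply[OF lip(1), of 1] lip(2) show thesis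
    using that by simp
qed

lemma C2_on_square_partial:
  fixes c :: "real \<Rightarrow> real \<Rightarrow> real"
  assumes "C2_on ({a..b} \<times> {a..b}) (\<lambda>p. c (fst p) (snd p))"
  obtains c1 B B1
  where "\<forall>y\<in>{a..b}. \<forall>z\<in>{a..b}. ((\<lambda>u. c u z) has_real_derivative c1 y z) (at y within {a..b})"
    "B-lipschitz_on ({a..b} \<times> {a..b}) (\<lambda>p. c1 (fst p) (snd p))"
    "B1-lipschitz_on ({a..b} \<times> {a..b}) (\<lambda>p. c (fst p) (snd p))"
proof -
  let ?Q = "{a..b} \<times> {a..b}"
  obtain h B B1
    where d: "\<forall>p\<in>?Q. ((\<lambda>p. c (fst p) (snd p)) has_derivative blinfun_apply (h p)) (at p within ?Q)"
    and lip: "B-lipschitz_on ?Q h" "B1-lipschitz_on ?Q (\<lambda>p. c (fst p) (snd p))"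
    using C2_on_lipschitz_derivative[OF assms compact_Times convex_Times] by auto
  define c1 where "c1 y z = h (y, z) (1, 0)" for y z
  have "((\<lambda>u. c u z) has_real_derivative c1 y z) (at y within {a..b})"
    if "y \<in> {a..b}" "z \<in> {a..b}" for y z
  proof -
    have pair: "((\<lambda>u. (u, z)) has_derivative (\<lambda>t. (t, 0))) (at y within {a..b})"
      by (rule has_derivative_Pair[OF has_derivative_ident has_derivative_const])
    have "((\<lambda>u. c (fst (u, z)) (snd (u, z))) has_derivative (\<lambda>t. h (y, z) (t, 0)))
        (at y within {a..b})"
      by (rule has_derivative_in_compose2[OF d[rule_format] _ that(1) pair]) (use that in auto)
    moreover have "h (y, z) (t, 0) = c1 y z * t" for t
    proof -
      have "h (y, z) (t, 0) = h (y, z) (t *\<^sub>R (1, 0))" by simp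
      also have "\<dots> = t *\<^sub>R h (y, z) (1, 0)" by (rule blinfun.scaleR_right)
      finally show ?thesis by (simp add: c1_def)
    qed
    ultimately show ?thesis by (simp add: has_field_derivative_def)
  qed
  moreover have "B-lipschitz_on ?Q (\<lambda>p. c1 (fst p) (snd p))"
    using lipschitz_on_blinfun_apply[OF lip(1), of "(1, 0)"] by (simp add: c1_def)
  ultimately show thesis using that lip(2) by blast
qed

section \<open>First-order expansion of the invasion fitness\<close>

lemma fit_diagonal: "c y y \<noteq> 0 \<Longrightarrow> fit b d c y y = 0"
  by (simp add: fit_def)

lemma fit_partial_derivative:
  fixes b d :: "real \<Rightarrow> real" and c :: "real \<Rightarrow> real \<Rightarrow> real"
  assumes b_C2: "C2_on {a0..a1} b" and d_C2: "C2_on {a0..a1} d"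
    and c_C2: "C2_on ({a0..a1} \<times> {a0..a1}) (\<lambda>p. c (fst p) (snd p))"
    and c_diag_pos: "\<forall>y\<in>{a0..a1}. c y y > 0"
  obtains f1 M L
  where "\<forall>z\<in>{a0..a1}. \<forall>u\<in>{a0..a1}.
      ((\<lambda>u. fit b d c u z) has_real_derivative f1 z u) (at u within {a0..a1})"
    "\<forall>z\<in>{a0..a1}. M-lipschitz_on {a0..a1} (f1 z)" "0 \<le> M"
    "L-lipschitz_on {a0..a1} (\<lambda>y. f1 y y)"
proof -
  let ?J = "{a0..a1}"
  obtain b' Lb' Lb where b': "\<forall>y\<in>?J. (b has_real_derivative b' y) (at y within ?J)"
    and lip_b: "Lb'-lipschitz_on ?J b'" "Lb-lipschitz_on ?J b"
    using C2_on_real_interval[OF b_C2] by blast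
  obtain d' Ld' Ld where d': "\<forall>y\<in>?J. (d has_real_derivative d' y) (at y within ?J)"
    and lip_d: "Ld'-lipschitz_on ?J d'" "Ld-lipschitz_on ?J d"
    using C2_on_real_interval[OF d_C2] by blast
  obtain c1 Lc1 Lc
    where c1: "\<forall>y\<in>?J. \<forall>z\<in>?J. ((\<lambda>u. c u z) has_real_derivative c1 y z) (at y within ?J)"
    and lip_c: "Lc1-lipschitz_on (?J \<times> ?J) (\<lambda>p. c1 (fst p) (snd p))"
      "Lc-lipschitz_on (?J \<times> ?J) (\<lambda>p. c (fst p) (snd p))"
    using C2_on_square_partial[OF c_C2] by blast
  (* the monomorphic equilibrium density of trait z *)
  define n where "n z = (b z - d z) / c z z" for z
  obtain Ln where lip_n: "Ln-lipschitz_on ?J n"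
    unfolding n_def using lipschitz_on_divide_compact[OF _ lipschitz_on_diff[OF lip_b(2) lip_d(2)]
        lipschitz_on_diagonal[OF lip_c(2)] c_diag_pos] by auto
  obtain N where "N > 0" and N: "\<forall>z\<in>?J. \<bar>n z\<bar> \<le> N"
    using lipschitz_on_compact_bounded[OF _ lip_n] by auto
  define f1 where "f1 z u = b' u - d' u - n z * c1 u z" for z u
  have "((\<lambda>u. fit b d c u z) has_real_derivative f1 z u) (at u within ?J)"
    if "z \<in> ?J" "u \<in> ?J" for z u
  proof -
    have "fit b d c u z = b u - d u - n z * c u z" for u
      by (simp add: fit_def n_def)
    then show ?thesis
      unfolding f1_def using b' d' c1 that by (auto intro!: derivative_eq_intros)
  qed
  moreover have "(Lb' + Ld' + N * Lc1)-lipschitz_on ?J (f1 z)" if "z \<in> ?J" for z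
    unfolding f1_def using lip_b(1) lip_d(1) lipschitz_on_section[OF lip_c(1) that] N that
    by (intro lipschitz_on_diff lipschitz_on_cmult_real_upper) auto
  moreover have "0 \<le> Lb' + Ld' + N * Lc1"
    using \<open>N > 0\<close> lip_b(1) lip_d(1) lip_c(1) by (simp add: lipschitz_on_nonneg)
  moreover obtain L where "L-lipschitz_on ?J (\<lambda>y. f1 y y)"
  proof -
    obtain Lp where "Lp-lipschitz_on ?J (\<lambda>y. n y * c1 y y)"
      using lipschitz_on_mult_compact[OF _ lip_n lipschitz_on_diagonal[OF lip_c(1)]] by auto
    from lipschitz_on_diff[OF lipschitz_on_diff[OF lip_b(1) lip_d(1)] this] show thesis
      by (intro that) (simp add: f1_def)
  qed
  ultimately show thesis using that by blast
qed

lemma fit_first_order_expansion: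
  fixes b d :: "real \<Rightarrow> real" and c :: "real \<Rightarrow> real \<Rightarrow> real"
  assumes b_C2: "C2_on {a0..a1} b" and d_C2: "C2_on {a0..a1} d"
    and c_C2: "C2_on ({a0..a1} \<times> {a0..a1}) (\<lambda>p. c (fst p) (snd p))"
    and c_diag_pos: "\<forall>y\<in>{a0..a1}. c y y > 0"
  obtains s M L
  where "\<forall>y\<in>{a0..a1}. ((\<lambda>u. fit b d c u y) has_real_derivative s y) (at y within {a0..a1})"
    "\<forall>y\<in>{a0..a1}. \<forall>y'\<in>{a0..a1}. \<bar>fit b d c y' y - (y' - y) * s y\<bar> \<le> M * (y' - y)\<^sup>2"
    "0 \<le> M" "L-lipschitz_on {a0..a1} s"
proof -
  obtain f1 M L where deriv: "\<forall>z\<in>{a0..a1}. \<forall>u\<in>{a0..a1}.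
      ((\<lambda>u. fit b d c u z) has_real_derivative f1 z u) (at u within {a0..a1})"
    and lip: "\<forall>z\<in>{a0..a1}. M-lipschitz_on {a0..a1} (f1 z)" "0 \<le> M"
      "L-lipschitz_on {a0..a1} (\<lambda>y. f1 y y)"
    using fit_partial_derivative[OF assms] by blast
  have "\<bar>fit b d c y' y - (y' - y) * f1 y y\<bar> \<le> M * (y' - y)\<^sup>2"
    if "y \<in> {a0..a1}" "y' \<in> {a0..a1}" for y y'
  proof -
    have "c y y > 0" using c_diag_pos that(1) by blast
    then have "fit b d c y y = 0" by (intro fit_diagonal) simp
    then show ?thesis
      using lipschitz_derivative_taylor_bound[of a0 a1 "\<lambda>u. fit b d c u y" "f1 y" M y y']
        deriv lip(1) that by auto
  qed
  then show thesis using that[of "\<lambda>y. f1 y y"] deriv lip(2,3) by blast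
qed

section \<open>Solutions of \<open>x' = s(x)\<close> for Lipschitz \<open>s\<close>\<close>

lemma flow_of_gradient:
  fixes F :: "real \<Rightarrow> real \<Rightarrow> real" and s x :: "real \<Rightarrow> real"
  assumes "a < b" and range: "\<forall>t\<in>{0..T}. x t \<in> {a..b}"
    and gradient: "\<forall>y\<in>{a..b}. ((\<lambda>u. F u y) has_real_derivative s y) (at y within {a..b})"
    and ode: "\<forall>t\<in>{0..T}. \<exists>D. (x has_real_derivative D) (at t within {0..T}) \<and>
      ((\<lambda>y. F y (x t)) has_real_derivative D) (at (x t) within {a..b})"
  shows "\<forall>t\<in>{0..T}. (x has_real_derivative s (x t)) (at t within {0..T})"
proof
  fix t assume "t \<in> {0..T}"
  then obtain D where "(x has_real_derivative D) (at t within {0..T})"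
    and "((\<lambda>y. F y (x t)) has_real_derivative D) (at (x t) within {a..b})"
    using ode by blast
  moreover have "D = s (x t)"
    using has_real_derivative_unique_Icc[OF \<open>a < b\<close> _ calculation(2)] gradient range \<open>t \<in> {0..T}\<close>
    by blast
  ultimately show "(x has_real_derivative s (x t)) (at t within {0..T})" by simp
qed

lemma flow_stays_at_equilibrium:
  fixes x s :: "real \<Rightarrow> real"
  assumes flow: "\<forall>t\<in>{0..T}. (x has_real_derivative s (x t)) (at t within {0..T})"
    and range: "\<forall>t\<in>{0..T}. x t \<in> J" and lip: "L-lipschitz_on J s"
    and equilibrium: "z \<in> J" "s z = 0"
    and hit: "t0 \<in> {0..T}" "x t0 = z" and t: "t \<in> {0..T}"
  shows "x t = z"
proof -
  have drift: "\<bar>(x u - z) * s (x u)\<bar> \<le> L * (x u - z)\<^sup>2" if "u \<in> {0..T}" for u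
  proof -
    have "\<bar>s (x u)\<bar> \<le> L * \<bar>x u - z\<bar>"
      using lipschitz_onD[OF lip, of "x u" z] range that equilibrium by (simp add: dist_real_def)
    then have "\<bar>x u - z\<bar> * \<bar>s (x u)\<bar> \<le> \<bar>x u - z\<bar> * (L * \<bar>x u - z\<bar>)"
      by (rule mult_left_mono) simp
    then show ?thesis by (simp add: abs_mult power2_eq_square mult_ac)
  qed
  (* Gronwall: with c = -2L (resp. 2L) the weight w c is nonincreasing (resp. nondecreasing). *)
  define w where "w c u = (x u - z)\<^sup>2 * exp (c * u)" for c u
  have w_deriv: "\<forall>u\<in>{0..T}. (w c has_real_derivative
      (2 * ((x u - z) * s (x u)) + c * (x u - z)\<^sup>2) * exp (c * u)) (at u within {0..T})" for c
    unfolding w_def using flow by (auto intro!: derivative_eq_intros simp: algebra_simps)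
  have w_hit: "w c t0 = 0" for c
    using hit(2) by (simp add: w_def)
  have "\<exists>c. w c t \<le> 0"
  proof (cases "t0 \<le> t")
    case True
    obtain \<xi> where "\<xi> \<in> {0..T}" and
      eq: "w (-2 * L) t - w (-2 * L) t0
        = (2 * ((x \<xi> - z) * s (x \<xi>)) + -2 * L * (x \<xi> - z)\<^sup>2) * exp (-2 * L * \<xi>) * (t - t0)"
      using real_mvt_between[OF w_deriv hit(1) t] by blast
    have "w (-2 * L) t - w (-2 * L) t0 \<le> 0"
      unfolding eq using drift[OF \<open>\<xi> \<in> {0..T}\<close>] True
      by (intro mult_nonpos_nonneg) (auto simp: abs_le_iff)
    then show ?thesis using w_hit by (intro exI[of _ "-2 * L"]) simp
  next
    case False
    obtain \<xi> where "\<xi> \<in> {0..T}" and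
      eq: "w (2 * L) t0 - w (2 * L) t
        = (2 * ((x \<xi> - z) * s (x \<xi>)) + 2 * L * (x \<xi> - z)\<^sup>2) * exp (2 * L * \<xi>) * (t0 - t)"
      using real_mvt_between[OF w_deriv t hit(1)] by blast
    have "0 \<le> w (2 * L) t0 - w (2 * L) t"
      unfolding eq using drift[OF \<open>\<xi> \<in> {0..T}\<close>] False
      by (intro mult_nonneg_nonneg) (auto simp: abs_le_iff)
    then show ?thesis using w_hit by (intro exI[of _ "2 * L"]) simp
  qed
  then obtain c where "(x t - z)\<^sup>2 * exp (c * t) \<le> 0"
    unfolding w_def by blast
  moreover have "0 < (x t - z)\<^sup>2 * exp (c * t)" if "x t \<noteq> z"
    using that by simp
  ultimately show ?thesis by fastforce
qed

lemma flow_speed_stays_positive: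
  fixes x s :: "real \<Rightarrow> real"
  assumes flow: "\<forall>t\<in>{0..T}. (x has_real_derivative s (x t)) (at t within {0..T})"
    and range: "\<forall>t\<in>{0..T}. x t \<in> J" and lip: "L-lipschitz_on J s"
    and start: "s (x 0) > 0" and t: "t \<in> {0..T}"
  shows "s (x t) > 0"
proof (rule ccontr)
  assume "\<not> s (x t) > 0"
  have "continuous_on {0..T} x"
    using flow by (intro DERIV_continuous_on) auto
  then have "continuous_on {0..T} (\<lambda>u. s (x u))"
    by (rule continuous_on_compose2[OF lipschitz_on_continuous_on[OF lip]]) (use range in auto)
  then have "continuous_on {0..t} (\<lambda>u. s (x u))"
    by (rule continuous_on_subset) (use t in auto)
  then obtain t1 where t1: "0 \<le> t1" "t1 \<le> t" "s (x t1) = 0"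
    using IVT2'[of "\<lambda>u. s (x u)" t 0 0] start t \<open>\<not> s (x t) > 0\<close> by auto
  have "x 0 = x t1"
    by (rule flow_stays_at_equilibrium[OF flow range lip _ t1(3)]) (use t t1 range in auto)
  with start t1(3) show False by simp
qed

section \<open>The resident walk near an equilibrium\<close>

lemma reached_grid_mem:
  assumes "reached I F x0 \<delta> t i" "k \<le> i" "x0 \<in> I"
  shows "x0 + real k * \<delta> \<in> I"
proof (cases k)
  case (Suc j)
  then have "j < i" using assms(2) by simp
  then show ?thesis using assms(1) Suc unfolding reached_def by blast
qed (use assms in simp)

lemma reached_Max:
  fixes I :: "real set" and F :: "real \<Rightarrow> real \<Rightarrow> real"
  assumes "bdd_above I" "\<delta> > 0" "0 \<le> t" "x0 \<in> I"
  defines "R \<equiv> {i. reached I F x0 \<delta> t i}"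
  shows "Max R \<in> R" and "\<And>i. i \<in> R \<Longrightarrow> i \<le> Max R"
proof -
  obtain B where B: "\<forall>y\<in>I. y \<le> B" using assms(1) by (auto simp: bdd_above_def)
  have "R \<subseteq> {..nat \<lceil>(B - x0) / \<delta>\<rceil>}"
  proof
    fix i assume "i \<in> R"
    then have "x0 + real i * \<delta> \<le> B"
      using reached_grid_mem[of I F x0 \<delta> t i i] assms(4) B unfolding R_def by auto
    then have "real i \<le> (B - x0) / \<delta>" using assms(2) by (simp add: field_simps)
    then show "i \<in> {..nat \<lceil>(B - x0) / \<delta>\<rceil>}" by (simp add: le_nat_iff le_ceiling_iff)
  qed
  then have "finite R" by (rule finite_subset) simp
  moreover have "0 \<in> R" using assms(3) by (simp add: R_def reached_def)
  ultimately show "Max R \<in> R" "\<And>i. i \<in> R \<Longrightarrow> i \<le> Max R"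
    by (auto intro: Max_in)
qed

lemma reached_rescaled:
  assumes "\<delta> > 0"
  shows "reached I F x0 \<delta> (t / \<delta>\<^sup>2) i \<longleftrightarrow>
    (\<forall>k<i. x0 + real (Suc k) * \<delta> \<in> I \<and> F (x0 + real (Suc k) * \<delta>) (x0 + real k * \<delta>) > 0) \<and>
    (\<Sum>k<i. \<delta>\<^sup>2 / F (x0 + real (Suc k) * \<delta>) (x0 + real k * \<delta>)) \<le> t"
proof -
  have "(t / \<delta>\<^sup>2 \<ge> X) \<longleftrightarrow> (\<delta>\<^sup>2 * X \<le> t)" for X
    using assms by (simp add: field_simps)
  then show ?thesis unfolding reached_def by (simp add: sum_distrib_left)
qed

lemma reached_steps_at_equilibrium:
  fixes F :: "real \<Rightarrow> real \<Rightarrow> real" and s :: "real \<Rightarrow> real"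
  assumes "\<delta> > 0" "x0 \<in> I"
    and expansion: "\<forall>y\<in>I. \<forall>y'\<in>I. \<bar>F y' y - (y' - y) * s y\<bar> \<le> M * (y' - y)\<^sup>2"
    and lip: "L-lipschitz_on I s" and "s x0 = 0" "0 \<le> M"
    and reached: "reached I F x0 \<delta> (t / \<delta>\<^sup>2) i"
  shows "ln (real i + 1) \<le> (L + M + 1) * t"
proof -
  define A where "A = L + M + 1"
  have "A > 0" using lipschitz_on_nonneg[OF lip] \<open>0 \<le> M\<close> by (simp add: A_def)
  let ?y = "\<lambda>k. x0 + real k * \<delta>"
  have valid: "\<forall>k<i. ?y (Suc k) \<in> I \<and> F (?y (Suc k)) (?y k) > 0"
    and waits: "(\<Sum>k<i. \<delta>\<^sup>2 / F (?y (Suc k)) (?y k)) \<le> t"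
    using reached reached_rescaled[OF \<open>\<delta> > 0\<close>] by blast+
  have slow: "inverse (real (Suc k)) / A \<le> \<delta>\<^sup>2 / F (?y (Suc k)) (?y k)" if "k < i" for k
  proof -
    have yk: "?y k \<in> I" using reached_grid_mem[OF reached, of k] that \<open>x0 \<in> I\<close> by simp
    have "\<bar>F (?y (Suc k)) (?y k) - \<delta> * s (?y k)\<bar> \<le> M * \<delta>\<^sup>2"
      using expansion yk valid that by (force simp: algebra_simps)
    moreover have "s (?y k) \<le> L * (real k * \<delta>)"
      using lipschitz_onD[OF lip yk \<open>x0 \<in> I\<close>] \<open>s x0 = 0\<close> \<open>\<delta> > 0\<close> by (simp add: dist_real_def)
    ultimately have "F (?y (Suc k)) (?y k) \<le> \<delta> * (L * (real k * \<delta>)) + M * \<delta>\<^sup>2"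
      using \<open>\<delta> > 0\<close> mult_left_mono[of "s (?y k)" "L * (real k * \<delta>)" \<delta>] by linarith
    also have "\<dots> \<le> \<delta>\<^sup>2 * (A * real (Suc k))"
      using \<open>\<delta> > 0\<close> \<open>0 \<le> M\<close> lipschitz_on_nonneg[OF lip]
      by (simp add: A_def power2_eq_square algebra_simps)
    finally have "\<delta>\<^sup>2 / (\<delta>\<^sup>2 * (A * real (Suc k))) \<le> \<delta>\<^sup>2 / F (?y (Suc k)) (?y k)"
      using valid that \<open>\<delta> > 0\<close> \<open>A > 0\<close> by (intro divide_left_mono) auto
    moreover have "\<delta>\<^sup>2 / (\<delta>\<^sup>2 * (A * real (Suc k))) = inverse (real (Suc k)) / A"
      using \<open>\<delta> > 0\<close> by (simp del: of_nat_Suc add: field_simps)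
    ultimately show ?thesis by simp
  qed
  have "ln (real i + 1) / A \<le> harm i / A"
    using ln_le_harm \<open>A > 0\<close> by (simp add: divide_right_mono)
  also have "\<dots> = (\<Sum>k<i. inverse (real (Suc k)) / A)"
    by (simp add: harm_altdef sum_divide_distrib)
  also have "\<dots> \<le> (\<Sum>k<i. \<delta>\<^sup>2 / F (?y (Suc k)) (?y k))"
    using slow by (intro sum_mono) simp
  also have "\<dots> \<le> t" by (rule waits)
  finally show ?thesis using \<open>A > 0\<close> by (simp add: A_def field_simps)
qed

lemma resident_converges_at_equilibrium:
  fixes F :: "real \<Rightarrow> real \<Rightarrow> real" and s x :: "real \<Rightarrow> real"
  assumes "0 < T"
    and flow: "\<forall>t\<in>{0..T}. (x has_real_derivative s (x t)) (at t within {0..T})"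
    and range: "\<forall>t\<in>{0..T}. x t \<in> {a0..a1}" and "x 0 = x0" and "s x0 = 0"
    and expansion: "\<forall>y\<in>{a0..a1}. \<forall>y'\<in>{a0..a1}. \<bar>F y' y - (y' - y) * s y\<bar> \<le> M * (y' - y)\<^sup>2"
    and "0 \<le> M" and lip: "L-lipschitz_on {a0..a1} s"
  shows "uniform_limit {0..T} (\<lambda>\<delta> t. resident {a0..a1} F x0 \<delta> (t / \<delta>\<^sup>2)) x (at_right 0)"
proof (rule uniform_limit_at_right_0_of_linear_bound[where K = "exp ((L + M + 1) * T)"])
  have "x0 \<in> {a0..a1}" using range \<open>0 < T\<close> \<open>x 0 = x0\<close> by force
  have x_const: "x t = x0" if "t \<in> {0..T}" for t
    using flow_stays_at_equilibrium[OF flow range lip \<open>x0 \<in> {a0..a1}\<close> \<open>s x0 = 0\<close> _ \<open>x 0 = x0\<close> that]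
      \<open>0 < T\<close> by simp
  show "\<forall>\<^sub>F \<delta> in at_right 0. \<forall>t\<in>{0..T}.
      dist (resident {a0..a1} F x0 \<delta> (t / \<delta>\<^sup>2)) (x t) \<le> exp ((L + M + 1) * T) * \<delta>"
    using eventually_at_right_less
  proof eventually_elim
    case (elim \<delta>)
    show ?case
    proof
      fix t assume t: "t \<in> {0..T}"
      define K where "K = Max {i. reached {a0..a1} F x0 \<delta> (t / \<delta>\<^sup>2) i}"
      have "reached {a0..a1} F x0 \<delta> (t / \<delta>\<^sup>2) K"
        using reached_Max(1)[of "{a0..a1}" \<delta> "t / \<delta>\<^sup>2" x0 F] elim t \<open>x0 \<in> {a0..a1}\<close>
        by (simp add: K_def)
      then have "ln (real K + 1) \<le> (L + M + 1) * t"
        using reached_steps_at_equilibrium[OF elim \<open>x0 \<in> {a0..a1}\<close> expansion lip \<open>s x0 = 0\<close> \<open>0 \<le> M\<close>]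
        by blast
      also have "\<dots> \<le> (L + M + 1) * T"
        using t lipschitz_on_nonneg[OF lip] \<open>0 \<le> M\<close> by (intro mult_left_mono) auto
      finally have "real K + 1 \<le> exp ((L + M + 1) * T)"
        using exp_le_cancel_iff[of "ln (real K + 1)" "(L + M + 1) * T"] by simp
      then have "real K * \<delta> \<le> exp ((L + M + 1) * T) * \<delta>"
        using elim by (intro mult_right_mono) auto
      then show "dist (resident {a0..a1} F x0 \<delta> (t / \<delta>\<^sup>2)) (x t) \<le> exp ((L + M + 1) * T) * \<delta>"
        using elim x_const[OF t] by (simp add: resident_def K_def dist_real_def)
    qed
  qed
qed

section \<open>The resident walk along an increasing solution\<close>

lemma ratio_difference_bound:
  fixes \<delta> m \<sigma> F K :: real
  assumes "0 < \<delta>" "0 < m" "m \<le> \<sigma>" "\<delta> * m / 2 \<le> F" "\<bar>\<delta> * \<sigma> - F\<bar> \<le> K * \<delta>\<^sup>2"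
  shows "\<bar>\<delta>\<^sup>2 / F - \<delta> / \<sigma>\<bar> \<le> 2 * K / m\<^sup>2 * \<delta>\<^sup>2"
proof -
  have "0 < \<delta> * m / 2" using assms(1,2) by simp
  then have "F > 0" "\<sigma> > 0" using assms(2-4) by linarith+
  then have "\<delta>\<^sup>2 / F - \<delta> / \<sigma> = \<delta> * (\<delta> * \<sigma> - F) / (F * \<sigma>)"
    by (simp add: field_simps power2_eq_square)
  then have "\<bar>\<delta>\<^sup>2 / F - \<delta> / \<sigma>\<bar> = \<delta> * \<bar>\<delta> * \<sigma> - F\<bar> / (F * \<sigma>)"
    using \<open>F > 0\<close> \<open>\<sigma> > 0\<close> \<open>0 < \<delta>\<close> by (simp add: abs_mult abs_divide)
  also have "\<dots> \<le> \<delta> * (K * \<delta>\<^sup>2) / (\<delta> * m / 2 * m)"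
  proof (rule frac_le)
    show "\<delta> * \<bar>\<delta> * \<sigma> - F\<bar> \<le> \<delta> * (K * \<delta>\<^sup>2)"
      using assms(1,5) by (intro mult_left_mono) auto
    show "\<delta> * m / 2 * m \<le> F * \<sigma>"
      using assms \<open>F > 0\<close> by (intro mult_mono) auto
  qed (use assms in \<open>auto intro: order.trans[OF abs_ge_zero]\<close>)
  also have "\<dots> = 2 * K / m\<^sup>2 * \<delta>\<^sup>2"
    using assms(1,2) by (simp add: field_simps power2_eq_square)
  finally show ?thesis .
qed

locale grid_walk_along_flow =
  fixes a0 a1 T m S M L \<delta> x0 :: real and F :: "real \<Rightarrow> real \<Rightarrow> real" and s x :: "real \<Rightarrow> real"
  assumes T_pos: "0 < T"
    and flow: "\<forall>t\<in>{0..T}. (x has_real_derivative s (x t)) (at t within {0..T})"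
    and flow_range: "\<forall>t\<in>{0..T}. x t \<in> {a0..a1}"
    and flow_start: "x 0 = x0"
    and speed_pos: "0 < m" and speed_lower: "\<forall>t\<in>{0..T}. m \<le> s (x t)"
    and speed_upper: "\<forall>y\<in>{a0..a1}. \<bar>s y\<bar> \<le> S"
    and expansion: "\<forall>y\<in>{a0..a1}. \<forall>y'\<in>{a0..a1}. \<bar>F y' y - (y' - y) * s y\<bar> \<le> M * (y' - y)\<^sup>2"
    and M_nonneg: "0 \<le> M" and lipschitz: "L-lipschitz_on {a0..a1} s"
    and mesh_pos: "0 < \<delta>" and mesh_le_1: "\<delta> \<le> 1" and mesh_small: "M * \<delta> \<le> m / 2"
begin

definition grid :: "nat \<Rightarrow> real" where "grid k = x0 + real k * \<delta>"

(* The time the resident spends at grid k, measured on the scale t = \<delta>\<^sup>2 * (original time). *)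
definition wait :: "nat \<Rightarrow> real" where "wait k = \<delta>\<^sup>2 / F (grid (Suc k)) (grid k)"

(* Meaningful only for x0 \<le> v \<le> x T, where the level v is hit exactly once. *)
definition hit :: "real \<Rightarrow> real" where "hit v = (SOME \<theta>. \<theta> \<in> {0..T} \<and> x \<theta> = v)"

definition lag :: real where "lag = 2 * (L + M) / m\<^sup>2 * (a1 - a0)"

lemma flow_increment:
  assumes "u \<in> {0..T}" "v \<in> {0..T}" "u \<le> v"
  shows "m * (v - u) \<le> x v - x u" "x v - x u \<le> S * (v - u)"
proof -
  obtain \<xi> where "\<xi> \<in> {0..T}" "x v - x u = s (x \<xi>) * (v - u)"
    using real_mvt_between[OF flow assms(1,2)] by blast
  moreover have "m \<le> s (x \<xi>)" "s (x \<xi>) \<le> S"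
    using speed_lower speed_upper flow_range \<open>\<xi> \<in> {0..T}\<close> by (auto simp: abs_le_iff)
  ultimately show "m * (v - u) \<le> x v - x u" "x v - x u \<le> S * (v - u)"
    using \<open>u \<le> v\<close> by (simp_all add: mult_right_mono)
qed

lemma flow_le_iff:
  assumes "u \<in> {0..T}" "v \<in> {0..T}"
  shows "x u \<le> x v \<longleftrightarrow> u \<le> v"
proof
  show "u \<le> v \<Longrightarrow> x u \<le> x v"
    using flow_increment(1)[OF assms] speed_pos by (smt (verit) mult_nonneg_nonneg)
  show "x u \<le> x v \<Longrightarrow> u \<le> v"
    using flow_increment(1)[OF assms(2,1)] speed_pos by (smt (verit) mult_pos_pos)
qed

lemma start_mem: "x0 \<in> {a0..a1}"
  using flow_range T_pos flow_start by force

lemma flow_hit: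
  assumes "x0 \<le> v" "v \<le> x T"
  shows "hit v \<in> {0..T}" "x (hit v) = v"
proof -
  have "continuous_on {0..T} x"
    using flow by (intro DERIV_continuous_on) auto
  then have "\<exists>\<theta>. \<theta> \<in> {0..T} \<and> x \<theta> = v"
    using IVT'[of x 0 v T] assms flow_start T_pos by auto
  then show "hit v \<in> {0..T}" "x (hit v) = v"
    unfolding hit_def by (metis (mono_tags, lifting) someI_ex)+
qed

lemma hit_start: "hit x0 = 0"
proof -
  have "x0 \<le> x T" using flow_le_iff[of 0 T] T_pos flow_start by simp
  then have "hit x0 \<in> {0..T}" "x (hit x0) = x 0"
    using flow_hit[of x0] flow_start by auto
  then show ?thesis using flow_le_iff[of "hit x0" 0] T_pos by auto
qed

lemma grid_Suc: "grid (Suc k) = grid k + \<delta>"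
  by (simp add: grid_def algebra_simps)

lemma grid_ge_start: "x0 \<le> grid k"
  using mesh_pos by (simp add: grid_def)

lemma grid_mono: "k \<le> j \<Longrightarrow> grid k \<le> grid j"
  using mesh_pos by (simp add: grid_def mult_right_mono)

lemma grid_mem:
  assumes "grid k \<le> x T"
  shows "grid k \<in> {a0..a1}"
proof -
  have "x T \<le> a1" using flow_range T_pos by auto
  then show ?thesis using assms grid_ge_start[of k] start_mem by auto
qed

lemma speed_at_grid: "grid k \<le> x T \<Longrightarrow> m \<le> s (grid k)"
  using flow_hit[OF grid_ge_start] speed_lower by metis

lemma S_pos: "0 < S"
  using speed_lower speed_upper start_mem flow_start T_pos speed_pos by force

lemma step_fitness_lower:
  assumes "grid (Suc k) \<le> x T"
  shows "\<delta> * m / 2 \<le> F (grid (Suc k)) (grid k)"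
proof -
  have "grid k \<le> x T" using assms grid_mono[of k "Suc k"] by simp
  have "\<bar>F (grid (Suc k)) (grid k) - \<delta> * s (grid k)\<bar> \<le> M * \<delta>\<^sup>2"
    using expansion[rule_format, OF grid_mem[OF \<open>grid k \<le> x T\<close>] grid_mem[OF assms]]
    by (simp add: grid_Suc)
  moreover have "M * \<delta>\<^sup>2 \<le> \<delta> * (m / 2)"
    using mesh_small mesh_pos by (simp add: power2_eq_square mult.commute mult_left_mono)
  moreover have "\<delta> * m \<le> \<delta> * s (grid k)"
    using speed_at_grid[OF \<open>grid k \<le> x T\<close>] mesh_pos by simp
  ultimately show ?thesis by (simp add: abs_le_iff)
qed

lemma crossing_time:
  assumes "grid (Suc k) \<le> x T"
  obtains \<sigma> where "hit (grid (Suc k)) - hit (grid k) = \<delta> / \<sigma>" "m \<le> \<sigma>"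
    "\<bar>\<sigma> - s (grid k)\<bar> \<le> L * \<delta>"
proof -
  have "grid k \<le> x T" using assms grid_mono[of k "Suc k"] by simp
  define \<theta>1 \<theta>2 where "\<theta>1 = hit (grid k)" and "\<theta>2 = hit (grid (Suc k))"
  have \<theta>1: "\<theta>1 \<in> {0..T}" "x \<theta>1 = grid k"
    using flow_hit[OF grid_ge_start \<open>grid k \<le> x T\<close>] by (auto simp: \<theta>1_def)
  have \<theta>2: "\<theta>2 \<in> {0..T}" "x \<theta>2 = grid k + \<delta>"
    using flow_hit[OF grid_ge_start assms] by (auto simp: \<theta>2_def grid_Suc)
  have "\<theta>1 \<le> \<theta>2" using flow_le_iff[OF \<theta>1(1) \<theta>2(1)] \<theta>1 \<theta>2 mesh_pos by simp
  obtain \<xi> where "\<xi> \<in> {0..T}" "\<bar>\<xi> - \<theta>1\<bar> \<le> \<bar>\<theta>2 - \<theta>1\<bar>" "\<bar>\<xi> - \<theta>2\<bar> \<le> \<bar>\<theta>2 - \<theta>1\<bar>"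
    and mvt: "x \<theta>2 - x \<theta>1 = s (x \<xi>) * (\<theta>2 - \<theta>1)"
    using real_mvt_between[OF flow \<theta>1(1) \<theta>2(1)] by blast
  have speed: "m \<le> s (x \<xi>)" using speed_lower \<open>\<xi> \<in> {0..T}\<close> by simp
  have crossing: "\<theta>2 - \<theta>1 = \<delta> / s (x \<xi>)"
    using mvt \<theta>1 \<theta>2 speed speed_pos by (simp add: field_simps)
  have "\<theta>1 \<le> \<xi>" "\<xi> \<le> \<theta>2"
    using \<open>\<theta>1 \<le> \<theta>2\<close> \<open>\<bar>\<xi> - \<theta>1\<bar> \<le> _\<close> \<open>\<bar>\<xi> - \<theta>2\<bar> \<le> _\<close> by linarith+
  then have "grid k \<le> x \<xi>" "x \<xi> \<le> grid k + \<delta>"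
    using flow_le_iff \<theta>1 \<theta>2 \<open>\<xi> \<in> {0..T}\<close> by metis+
  have "\<bar>s (x \<xi>) - s (grid k)\<bar> \<le> L * \<bar>x \<xi> - grid k\<bar>"
    using lipschitz_onD[OF lipschitz, of "x \<xi>" "grid k"] flow_range \<open>\<xi> \<in> {0..T}\<close>
      grid_mem[OF \<open>grid k \<le> x T\<close>] by (simp add: dist_real_def)
  also have "\<dots> \<le> L * \<delta>"
    using \<open>grid k \<le> x \<xi>\<close> \<open>x \<xi> \<le> grid k + \<delta>\<close> lipschitz_on_nonneg[OF lipschitz]
    by (intro mult_left_mono) auto
  finally show thesis using that[OF _ speed] crossing by (simp add: \<theta>1_def \<theta>2_def)
qed

lemma step_wait_error:
  assumes "grid (Suc k) \<le> x T"
  shows "\<bar>wait k - (hit (grid (Suc k)) - hit (grid k))\<bar> \<le> 2 * (L + M) / m\<^sup>2 * \<delta>\<^sup>2"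
proof -
  obtain \<sigma> where \<sigma>: "hit (grid (Suc k)) - hit (grid k) = \<delta> / \<sigma>" "m \<le> \<sigma>"
    "\<bar>\<sigma> - s (grid k)\<bar> \<le> L * \<delta>"
    using crossing_time[OF assms] by blast
  have "grid k \<le> x T" using assms grid_mono[of k "Suc k"] by simp
  define Fk where "Fk = F (grid (Suc k)) (grid k)"
  have "\<bar>Fk - \<delta> * s (grid k)\<bar> \<le> M * \<delta>\<^sup>2"
    using expansion[rule_format, OF grid_mem[OF \<open>grid k \<le> x T\<close>] grid_mem[OF assms]]
    by (simp add: Fk_def grid_Suc)
  moreover have "\<bar>\<delta> * \<sigma> - \<delta> * s (grid k)\<bar> \<le> L * \<delta>\<^sup>2"
  proof -
    have "\<bar>\<delta> * \<sigma> - \<delta> * s (grid k)\<bar> = \<delta> * \<bar>\<sigma> - s (grid k)\<bar>"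
      using mesh_pos by (simp add: abs_mult right_diff_distrib[symmetric])
    also have "\<dots> \<le> \<delta> * (L * \<delta>)"
      using \<sigma>(3) mesh_pos by (intro mult_left_mono) auto
    finally show ?thesis by (simp add: power2_eq_square mult_ac)
  qed
  ultimately have "\<bar>\<delta> * \<sigma> - Fk\<bar> \<le> (L + M) * \<delta>\<^sup>2"
    by (simp only: abs_le_iff distrib_right) linarith
  moreover have "\<delta> * m / 2 \<le> Fk" using step_fitness_lower[OF assms] by (simp add: Fk_def)
  ultimately have "\<bar>\<delta>\<^sup>2 / Fk - \<delta> / \<sigma>\<bar> \<le> 2 * (L + M) / m\<^sup>2 * \<delta>\<^sup>2"
    by (intro ratio_difference_bound[OF mesh_pos speed_pos \<sigma>(2)])
  then show ?thesis unfolding wait_def \<sigma>(1) Fk_def .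
qed

lemma hitting_time_lag:
  assumes "grid i \<le> x T"
  shows "\<bar>(\<Sum>k<i. wait k) - hit (grid i)\<bar> \<le> lag * \<delta>"
proof -
  have "\<bar>(\<Sum>k<i. wait k) - hit (grid i)\<bar> \<le> 2 * (L + M) / m\<^sup>2 * \<delta>\<^sup>2 * real i"
    using assms
  proof (induction i)
    case 0
    then show ?case by (simp add: grid_def hit_start)
  next
    case (Suc i)
    then have "grid i \<le> x T" using grid_mono[of i "Suc i"] by simp
    have "(\<Sum>k<Suc i. wait k) - hit (grid (Suc i))
        = ((\<Sum>k<i. wait k) - hit (grid i)) + (wait i - (hit (grid (Suc i)) - hit (grid i)))"
      by simp
    then have "\<bar>(\<Sum>k<Suc i. wait k) - hit (grid (Suc i))\<bar>
        \<le> \<bar>(\<Sum>k<i. wait k) - hit (grid i)\<bar> + \<bar>wait i - (hit (grid (Suc i)) - hit (grid i))\<bar>"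
      by (simp only: abs_triangle_ineq)
    also have "\<dots> \<le> 2 * (L + M) / m\<^sup>2 * \<delta>\<^sup>2 * real i + 2 * (L + M) / m\<^sup>2 * \<delta>\<^sup>2"
      using Suc.IH[OF \<open>grid i \<le> x T\<close>] step_wait_error[OF Suc.prems] by (rule add_mono)
    finally show ?case by (simp add: distrib_left)
  qed
  also have "\<dots> \<le> 2 * (L + M) / m\<^sup>2 * \<delta> * (a1 - a0)"
  proof -
    have "x T \<le> a1" using flow_range T_pos by auto
    then have "real i * \<delta> \<le> a1 - a0"
      using assms start_mem by (simp add: grid_def)
    moreover have "0 \<le> 2 * (L + M) / m\<^sup>2 * \<delta>"
      using mesh_pos lipschitz_on_nonneg[OF lipschitz] M_nonneg by simp
    ultimately have "2 * (L + M) / m\<^sup>2 * \<delta> * (real i * \<delta>) \<le> 2 * (L + M) / m\<^sup>2 * \<delta> * (a1 - a0)"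
      by (rule mult_left_mono)
    then show ?thesis by (simp add: power2_eq_square mult_ac)
  qed
  finally show ?thesis by (simp add: lag_def mult_ac)
qed

definition steps :: "real \<Rightarrow> nat"
  where "steps t = Max {i. reached {a0..a1} F x0 \<delta> (t / \<delta>\<^sup>2) i}"

lemma resident_eq_grid: "resident {a0..a1} F x0 \<delta> (t / \<delta>\<^sup>2) = grid (steps t)"
  by (simp add: resident_def steps_def grid_def)

lemma reached_iff_grid:
  "reached {a0..a1} F x0 \<delta> (t / \<delta>\<^sup>2) i \<longleftrightarrow>
    (\<forall>k<i. grid (Suc k) \<in> {a0..a1} \<and> 0 < F (grid (Suc k)) (grid k)) \<and> (\<Sum>k<i. wait k) \<le> t"
  using reached_rescaled[OF mesh_pos] by (simp add: grid_def wait_def)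

lemma steps_reached: "0 \<le> t \<Longrightarrow> reached {a0..a1} F x0 \<delta> (t / \<delta>\<^sup>2) (steps t)"
  using reached_Max(1)[where I="{a0..a1}" and t="t / \<delta>\<^sup>2" and F=F] mesh_pos start_mem
  by (simp add: steps_def)

lemma le_steps: "0 \<le> t \<Longrightarrow> reached {a0..a1} F x0 \<delta> (t / \<delta>\<^sup>2) i \<Longrightarrow> i \<le> steps t"
  using reached_Max(2)[where I="{a0..a1}" and t="t / \<delta>\<^sup>2" and F=F and i=i] mesh_pos start_mem
  by (simp add: steps_def)

lemma reached_below_flow:
  assumes "grid i \<le> x T" "(\<Sum>k<i. wait k) \<le> t"
  shows "reached {a0..a1} F x0 \<delta> (t / \<delta>\<^sup>2) i"
proof -
  have "grid (Suc k) \<in> {a0..a1} \<and> 0 < F (grid (Suc k)) (grid k)" if "k < i" for k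
  proof -
    have "grid (Suc k) \<le> x T" using assms(1) grid_mono[of "Suc k" i] that by simp
    then show ?thesis
      using grid_mem step_fitness_lower[of k] mesh_pos speed_pos
      by (smt (verit) mult_pos_pos half_gt_zero)
  qed
  then show ?thesis using assms(2) reached_iff_grid by blast
qed

lemma grid_below:
  assumes "x0 \<le> v"
  obtains j where "grid j \<le> v" "v < grid j + \<delta>"
proof
  let ?j = "nat \<lfloor>(v - x0) / \<delta>\<rfloor>"
  have "0 \<le> (v - x0) / \<delta>" using assms mesh_pos by simp
  then have "real ?j \<le> (v - x0) / \<delta>" "(v - x0) / \<delta> < real ?j + 1"
    by linarith+
  then show "grid ?j \<le> v" "v < grid ?j + \<delta>"
    using mesh_pos by (simp_all add: grid_def field_simps)
qed

lemma lag_nonneg: "0 \<le> lag"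
  using start_mem lipschitz_on_nonneg[OF lipschitz] M_nonneg by (simp add: lag_def)

lemma wait_lower_bound:
  assumes "grid k \<in> {a0..a1}" "grid (Suc k) \<in> {a0..a1}" "0 < F (grid (Suc k)) (grid k)"
  shows "\<delta> / (S + M) \<le> wait k"
proof -
  have "F (grid (Suc k)) (grid k) \<le> \<delta> * s (grid k) + M * \<delta>\<^sup>2"
    using expansion[rule_format, OF assms(1,2)] by (simp add: grid_Suc abs_le_iff)
  also have "\<dots> \<le> \<delta> * S + M * \<delta>"
    using speed_upper assms(1) mesh_pos mesh_le_1 M_nonneg
    by (intro add_mono mult_left_mono) (auto simp: power2_eq_square abs_le_iff mult_le_cancel_left1)
  also have "\<dots> = \<delta> * (S + M)" by (simp add: algebra_simps)
  finally have "\<delta>\<^sup>2 / (\<delta> * (S + M)) \<le> wait k"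
    unfolding wait_def using assms(3) mesh_pos S_pos M_nonneg
    by (intro divide_left_mono mult_pos_pos) auto
  then show ?thesis using mesh_pos by (simp add: power2_eq_square)
qed

lemma sum_wait_lower_bound:
  assumes "0 \<le> t"
  shows "real (steps t - j) * (\<delta> / (S + M)) \<le> (\<Sum>k\<in>{j..<steps t}. wait k)"
proof -
  have "\<delta> / (S + M) \<le> wait k" if "k < steps t" for k
  proof (rule wait_lower_bound)
    show "grid k \<in> {a0..a1}"
      using reached_grid_mem[OF steps_reached[OF assms], of k] start_mem that
      by (simp add: grid_def)
    show "grid (Suc k) \<in> {a0..a1}" "0 < F (grid (Suc k)) (grid k)"
      using steps_reached[OF assms] reached_iff_grid that by auto
  qed
  then show ?thesis using sum_mono[of "{j..<steps t}" "\<lambda>_. \<delta> / (S + M)" wait] by simp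
qed

lemma resident_lower_bound:
  assumes t: "t \<in> {0..T}"
  shows "x t - grid (steps t) \<le> (S * lag + 1) * \<delta>"
proof -
  define t0 where "t0 = max 0 (t - lag * \<delta>)"
  have "0 \<le> lag * \<delta>" using lag_nonneg mesh_pos by simp
  then have t0: "t0 \<in> {0..T}" "t0 \<le> t" "t - t0 \<le> lag * \<delta>"
    using t by (auto simp: t0_def)
  have "x0 \<le> x t0" "x t0 \<le> x T"
    using flow_le_iff[of 0 t0] flow_le_iff[of t0 T] t0 flow_start by auto
  then obtain j where j: "grid j \<le> x t0" "x t0 < grid j + \<delta>"
    using grid_below by blast
  have "(\<Sum>k<j. wait k) \<le> t"
  proof (cases "t0 = 0")
    case True
    then have "j = 0" using j(1) flow_start mesh_pos by (simp add: grid_def mult_le_0_iff)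
    then show ?thesis using t by simp
  next
    case False
    have "hit (grid j) \<in> {0..T}" "x (hit (grid j)) = grid j"
      using flow_hit[OF grid_ge_start] j(1) \<open>x t0 \<le> x T\<close> by auto
    then have "hit (grid j) \<le> t0"
      using flow_le_iff[of "hit (grid j)" t0] t0(1) j(1) by auto
    then show ?thesis
      using hitting_time_lag[of j] j(1) \<open>x t0 \<le> x T\<close> False by (simp add: t0_def abs_le_iff)
  qed
  then have "j \<le> steps t"
    using reached_below_flow[of j] j(1) \<open>x t0 \<le> x T\<close> le_steps t by auto
  then have "grid j \<le> grid (steps t)" by (rule grid_mono)
  moreover have "x t - x t0 \<le> S * (lag * \<delta>)"
    using flow_increment(2)[OF t0(1) t t0(2)] t0(3) S_pos
    by (smt (verit) mult_left_mono)
  ultimately show ?thesis using j by (simp add: algebra_simps)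
qed

lemma resident_upper_bound:
  assumes t: "t \<in> {0..T}"
  shows "grid (steps t) - x t \<le> (S + M) * (1 / m + lag) * \<delta>"
proof -
  define K where "K = steps t"
  have "x0 \<le> x t" "x t \<le> x T"
    using flow_le_iff[of 0 t] flow_le_iff[of t T] t flow_start by auto
  then obtain j where j: "grid j \<le> x t" "x t < grid j + \<delta>"
    using grid_below by blast
  have bound_nonneg: "0 \<le> (S + M) * (1 / m + lag) * \<delta>"
    using S_pos M_nonneg speed_pos lag_nonneg mesh_pos by simp
  show ?thesis
  proof (cases "K \<le> j")
    case True
    then show ?thesis using grid_mono[OF True] j bound_nonneg by (simp add: K_def)
  next
    case False
    have "(\<Sum>k<K. wait k) \<le> t"
      using steps_reached[of t] t reached_iff_grid by (auto simp: K_def)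
    have "hit (grid j) \<in> {0..T}" "x (hit (grid j)) = grid j"
      using flow_hit[OF grid_ge_start] j(1) \<open>x t \<le> x T\<close> by auto
    then have "m * (t - hit (grid j)) \<le> x t - grid j"
      using flow_increment(1)[of "hit (grid j)" t] flow_le_iff[of "hit (grid j)" t] j(1) t by auto
    then have "t - hit (grid j) < \<delta> / m"
      using j(2) speed_pos by (simp add: field_simps)
    moreover have "hit (grid j) - lag * \<delta> \<le> (\<Sum>k<j. wait k)"
      using hitting_time_lag[of j] j(1) \<open>x t \<le> x T\<close> by (simp add: abs_le_iff)
    moreover have "real (K - j) * (\<delta> / (S + M)) \<le> (\<Sum>k\<in>{j..<K}. wait k)"
      using sum_wait_lower_bound[of t j] t by (simp add: K_def)
    moreover have "(\<Sum>k<K. wait k) = (\<Sum>k<j. wait k) + (\<Sum>k\<in>{j..<K}. wait k)"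
      using False by (simp add: lessThan_atLeast0 sum.atLeastLessThan_concat)
    ultimately have "real (K - j) * (\<delta> / (S + M)) \<le> \<delta> / m + lag * \<delta>"
      using \<open>(\<Sum>k<K. wait k) \<le> t\<close> by linarith
    then have "real (K - j) * \<delta> \<le> (S + M) * (1 / m + lag) * \<delta>"
      using S_pos M_nonneg by (simp add: field_simps)
    moreover have "grid K - grid j = real (K - j) * \<delta>"
      using False by (simp add: grid_def of_nat_diff algebra_simps)
    ultimately show ?thesis using j(1) by (simp add: K_def)
  qed
qed

lemma resident_error:
  assumes "t \<in> {0..T}"
  shows "\<bar>resident {a0..a1} F x0 \<delta> (t / \<delta>\<^sup>2) - x t\<bar> \<le> ((S + M) * (1 / m + lag) + S * lag + 1) * \<delta>"
proof -
  have "0 \<le> (S + M) * (1 / m + lag) * \<delta>" "0 \<le> (S * lag + 1) * \<delta>"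
    using mesh_pos S_pos M_nonneg speed_pos lag_nonneg by simp_all
  moreover have "((S + M) * (1 / m + lag) + S * lag + 1) * \<delta>
      = (S + M) * (1 / m + lag) * \<delta> + (S * lag + 1) * \<delta>"
    by (simp add: algebra_simps)
  ultimately show ?thesis
    using resident_lower_bound[OF assms] resident_upper_bound[OF assms]
    unfolding resident_eq_grid abs_le_iff by linarith
qed

end

lemma resident_converges_along_flow:
  fixes F :: "real \<Rightarrow> real \<Rightarrow> real" and s x :: "real \<Rightarrow> real"
  assumes "0 < T"
    and flow: "\<forall>t\<in>{0..T}. (x has_real_derivative s (x t)) (at t within {0..T})"
    and range: "\<forall>t\<in>{0..T}. x t \<in> {a0..a1}" and "x 0 = x0"
    and speed: "\<forall>t\<in>{0..T}. 0 < s (x t)"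
    and expansion: "\<forall>y\<in>{a0..a1}. \<forall>y'\<in>{a0..a1}. \<bar>F y' y - (y' - y) * s y\<bar> \<le> M * (y' - y)\<^sup>2"
    and "0 \<le> M" and lip: "L-lipschitz_on {a0..a1} s"
  shows "uniform_limit {0..T} (\<lambda>\<delta> t. resident {a0..a1} F x0 \<delta> (t / \<delta>\<^sup>2)) x (at_right 0)"
proof -
  have "continuous_on {0..T} x"
    using flow by (intro DERIV_continuous_on) auto
  then have "continuous_on {0..T} (\<lambda>t. s (x t))"
    by (rule continuous_on_compose2[OF lipschitz_on_continuous_on[OF lip]]) (use range in auto)
  moreover have "{0..T} \<noteq> {}" using \<open>0 < T\<close> by simp
  ultimately obtain tm where "tm \<in> {0..T}" "\<forall>t\<in>{0..T}. s (x tm) \<le> s (x t)"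
    using continuous_attains_inf[OF compact_Icc] by blast
  then obtain m where m: "0 < m" "\<forall>t\<in>{0..T}. m \<le> s (x t)"
    using speed by blast
  obtain S where S: "\<forall>y\<in>{a0..a1}. \<bar>s y\<bar> \<le> S"
    using lipschitz_on_compact_bounded[OF compact_Icc lip] by auto
  define K where "K = (S + M) * (1 / m + 2 * (L + M) / m\<^sup>2 * (a1 - a0))
    + S * (2 * (L + M) / m\<^sup>2 * (a1 - a0)) + 1"
  show ?thesis
  proof (rule uniform_limit_at_right_0_of_linear_bound)
    show "\<forall>\<^sub>F \<delta> in at_right 0. \<forall>t\<in>{0..T}.
        dist (resident {a0..a1} F x0 \<delta> (t / \<delta>\<^sup>2)) (x t) \<le> K * \<delta>"
      unfolding eventually_at_right_field
    proof (intro exI[of _ "min 1 (m / (2 * (M + 1)))"] conjI allI impI ballI)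
      show "0 < min 1 (m / (2 * (M + 1)))" using m \<open>0 \<le> M\<close> by simp
      fix \<delta> t :: real
      assume \<delta>: "0 < \<delta>" "\<delta> < min 1 (m / (2 * (M + 1)))" and t: "t \<in> {0..T}"
      have "\<delta> \<le> 1" "\<delta> \<le> m / (2 * (M + 1))" using \<delta>(2) by auto
      then have "(M + 1) * \<delta> \<le> (M + 1) * (m / (2 * (M + 1)))"
        using \<open>0 \<le> M\<close> by (intro mult_left_mono) auto
      also have "\<dots> = m / 2" using \<open>0 \<le> M\<close> by (simp add: field_simps)
      finally have "M * \<delta> \<le> m / 2" using \<delta>(1) by (simp add: algebra_simps)
      interpret grid_walk_along_flow a0 a1 T m S M L \<delta> x0 F s x
      proof
        show "\<forall>t\<in>{0..T}. m \<le> s (x t)" by (rule m(2))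
      qed (use assms m(1) S \<delta>(1) \<open>\<delta> \<le> 1\<close> \<open>M * \<delta> \<le> m / 2\<close> in auto)
      show "dist (resident {a0..a1} F x0 \<delta> (t / \<delta>\<^sup>2)) (x t) \<le> K * \<delta>"
        using resident_error[OF t] by (simp add: dist_real_def K_def lag_def)
    qed
  qed
qed

theorem theorem2:
  fixes a0 a1 x0 T :: real
    and b d :: "real \<Rightarrow> real" and c :: "real \<Rightarrow> real \<Rightarrow> real"
    and x :: "real \<Rightarrow> real"
  assumes I_ne: "a0 < a1"
    and b_C2: "C2_on {a0..a1} b" and d_C2: "C2_on {a0..a1} d"
    and c_C2: "C2_on ({a0..a1} \<times> {a0..a1}) (\<lambda>p. c (fst p) (snd p))"
    and b_nonneg: "\<forall>y\<in>{a0..a1}. b y \<ge> 0"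
    and d_nonneg: "\<forall>y\<in>{a0..a1}. d y \<ge> 0"
    and c_nonneg: "\<forall>y\<in>{a0..a1}. \<forall>z\<in>{a0..a1}. c y z \<ge> 0"
    and coexist: "\<forall>y\<in>{a0..a1}. b y > d y \<and> c y y > 0"
    and x0_int: "x0 \<in> {a0<..<a1}"
    and not_extremum: "\<forall>\<^sub>F \<delta> in at_right 0.
          \<not> local_fitness_max (fit b d c) \<delta> x0 \<and> \<not> local_fitness_min (fit b d c) \<delta> x0"
    and upward: "\<forall>\<^sub>F \<delta> in at_right 0. fit b d c (x0 + \<delta>) x0 > 0"
    and T_pos: "T > 0"
    and x_range: "\<forall>t\<in>{0..T}. x t \<in> {a0..a1}"
    and x_init: "x 0 = x0"
    and x_ode: "\<forall>t\<in>{0..T}. \<exists>D. (x has_real_derivative D) (at t within {0..T}) \<and>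
                   ((\<lambda>y. fit b d c y (x t)) has_real_derivative D) (at (x t) within {a0..a1})"
  shows "uniform_limit {0..T}
           (\<lambda>\<delta> t. resident {a0..a1} (fit b d c) x0 \<delta> (t / \<delta>\<^sup>2)) x (at_right 0)"
proof -
  obtain s M L where
    gradient: "\<forall>y\<in>{a0..a1}. ((\<lambda>u. fit b d c u y) has_real_derivative s y) (at y within {a0..a1})"
    and expansion: "\<forall>y\<in>{a0..a1}. \<forall>y'\<in>{a0..a1}.
      \<bar>fit b d c y' y - (y' - y) * s y\<bar> \<le> M * (y' - y)\<^sup>2"
    and "0 \<le> M" and lip: "L-lipschitz_on {a0..a1} s"
    using fit_first_order_expansion[OF b_C2 d_C2 c_C2] coexist by blast
  have flow: "\<forall>t\<in>{0..T}. (x has_real_derivative s (x t)) (at t within {0..T})"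
    using flow_of_gradient[OF I_ne x_range gradient x_ode] .
  have "x0 \<in> {a0..a1}" using x0_int by auto
  then have "0 \<le> s x0"
    using derivative_nonneg_of_eventually_pos[where F="fit b d c", OF x0_int _ _ upward]
      gradient fit_diagonal[of c x0 b d] coexist by fastforce
  then consider "s x0 = 0" | "0 < s x0" by linarith
  then show ?thesis
  proof cases
    case 1
    then show ?thesis
      by (rule resident_converges_at_equilibrium[OF T_pos flow x_range x_init _ expansion
            \<open>0 \<le> M\<close> lip])
  next
    case 2
    then have "\<forall>t\<in>{0..T}. 0 < s (x t)"
      using flow_speed_stays_positive[OF flow x_range lip] x_init by simp
    then show ?thesis
      by (rule resident_converges_along_flow[OF T_pos flow x_range x_init _ expansion \<open>0 \<le> M\<close> lip])
  qed
qed

end
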